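(* Suppose $g\in\mathcal R_n^f(\{y\},Z,k)$ for some $y\in Y$ and $k\ge1$, and suppose either (a) $X$ and $Y$ are metric spaces and $Z\subset M$ is closed, or (b) $Z=M$ and $X,Y$ are paracompact. Then there exist a neighborhood $V_y$ of $y$ in $Y$ and $\delta_y>0$ such that $g'\in\mathcal R_n^f(\{y'\},Z,k)$ whenever $y'\in V_y$ and $g'\in C(X,M)$ satisfies $\rho(g'(x),g(x))<\delta_y$ for all $x\in f^{-1}(y')$.
   Context: Let $(M,\rho)$ be a complete metric space, $Z\subset M$ closed, $n\ge0$, and $f\colon X\to Y$ a perfect surjection with $\dim f\le n$. For $H\subset Y$ and $k\ge1$, $\mathcal R_n^f(H,Z,k)$ is the set of $g\in C(X,M)$ such that for each $y\in H$ the set $g(f^{-1}(y))\cap Z$ can be covered by a family of open subsets of $M$ of mesh $\le1/k$ and order $\le n$ (every point of $M$ lies in at most $n+1$ members of the family). *)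

theory Defs
  imports "HOL-Analysis.Analysis"
begin

definition fibre :: "'a topology \<Rightarrow> ('a \<Rightarrow> 'b) \<Rightarrow> 'b \<Rightarrow> 'a set" where
  "fibre X f y = {x \<in> topspace X. f x = y}"

definition order_le :: "'m set set \<Rightarrow> nat \<Rightarrow> bool" where
  "order_le \<U> n \<longleftrightarrow> (\<forall>p. finite {U \<in> \<U>. p \<in> U} \<and> card {U \<in> \<U>. p \<in> U} \<le> n + 1)"

definition covering_dim_le :: "'a topology \<Rightarrow> nat \<Rightarrow> bool" where
  "covering_dim_le T n \<longleftrightarrow>
     (\<forall>\<C>. finite \<C> \<and> (\<forall>C\<in>\<C>. openin T C) \<and> \<Union>\<C> = topspace T \<longrightarrow>
        (\<exists>\<V>. finite \<V> \<and> (\<forall>V\<in>\<V>. openin T V) \<and> \<Union>\<V> = topspace T \<and>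
             (\<forall>V\<in>\<V>. \<exists>C\<in>\<C>. V \<subseteq> C) \<and> order_le \<V> n))"

definition map_dim_le :: "'a topology \<Rightarrow> 'b topology \<Rightarrow> ('a \<Rightarrow> 'b) \<Rightarrow> nat \<Rightarrow> bool" where
  "map_dim_le X Y f n \<longleftrightarrow> (\<forall>y\<in>topspace Y. covering_dim_le (subtopology X (fibre X f y)) n)"

definition paracompact_space :: "'a topology \<Rightarrow> bool" where
  "paracompact_space X \<longleftrightarrow> Hausdorff_space X \<and>
     (\<forall>\<C>. (\<forall>C\<in>\<C>. openin X C) \<and> \<Union>\<C> = topspace X \<longrightarrow>
        (\<exists>\<V>. (\<forall>V\<in>\<V>. openin X V) \<and> \<Union>\<V> = topspace X \<and>
             (\<forall>V\<in>\<V>. \<exists>C\<in>\<C>. V \<subseteq> C) \<and> locally_finite_in X \<V>))"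

definition R_set :: "'a topology \<Rightarrow> ('a \<Rightarrow> 'b) \<Rightarrow> nat \<Rightarrow> 'b set \<Rightarrow> 'm::metric_space set \<Rightarrow> nat
                     \<Rightarrow> ('a \<Rightarrow> 'm) set" where
  "R_set X f n H Z k = {g. continuous_map X euclidean g \<and>
     (\<forall>y\<in>H. \<exists>\<U>. (\<forall>U\<in>\<U>. open U) \<and> g ` (fibre X f y) \<inter> Z \<subseteq> \<Union>\<U> \<and>
        (\<forall>U\<in>\<U>. \<forall>a\<in>U. \<forall>b\<in>U. dist a b \<le> 1 / real k) \<and> order_le \<U> n)}"

end

theory Submission
  imports Defs
begin

(* Fix a cover \<U> witnessing g \<in> R_n^f({y},Z,k) and let W = \<Union>\<U>.  The image
   K = g(f\<inverse>(y)) is compact, because f is perfect, and K \<inter> Z \<subseteq> W with Z closed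
   and W open; hence there is a margin e > 0 such that every point of Z
   within distance e of K lies in W (margin_of_compact_inside_open).  The
   set of points x with g(x) within e/2 of K is an open neighbourhood of
   f\<inverse>(y), so since f is a closed map all fibres over some neighbourhood V
   of y lie inside it (closed_map_fibre_neighbourhood from the library).
   For y' \<in> V and g' that is e/2-close to g on f\<inverse>(y'), the triangle
   inequality puts g'(f\<inverse>(y')) \<inter> Z inside W (perturbation_within_margin),
   so the same cover \<U> witnesses g' \<in> R_n^f({y'},Z,k)
   (R_set_singleton_by_cover). *)

lemma margin_of_compact_inside_open:
  fixes K Z W :: "'m::metric_space set"
  assumes "compact K" and "closed Z" and "open W" and "K \<inter> Z \<subseteq> W"
  shows "\<exists>e>0. \<forall>q\<in>K. \<forall>p\<in>Z. dist q p < e \<longrightarrow> p \<in> W"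
proof -
  have "K \<subseteq> \<Union>{W, - Z}" and "\<And>G. G \<in> {W, - Z} \<Longrightarrow> open G"
    using assms by auto
  then obtain e where "0 < e" and e: "\<And>q. q \<in> K \<Longrightarrow> \<exists>G\<in>{W, - Z}. ball q e \<subseteq> G"
    using Heine_Borel_lemma[OF \<open>compact K\<close>] by metis
  have "p \<in> W" if "q \<in> K" "p \<in> Z" "dist q p < e" for p q
    using e[OF \<open>q \<in> K\<close>] that by auto
  with \<open>0 < e\<close> show ?thesis by blast
qed

lemma perturbation_within_margin:
  fixes g g' :: "'a \<Rightarrow> 'm::metric_space"
  assumes margin: "\<forall>q\<in>K. \<forall>p\<in>Z. dist q p < e \<longrightarrow> p \<in> W"
    and near: "\<forall>x\<in>A. \<exists>q\<in>K. dist q (g x) < e/2"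
    and close: "\<forall>x\<in>A. dist (g' x) (g x) < e/2"
  shows "g' ` A \<inter> Z \<subseteq> W"
proof
  fix p assume "p \<in> g' ` A \<inter> Z"
  then obtain x where "x \<in> A" and p: "p = g' x" "p \<in> Z" by blast
  then obtain q where "q \<in> K" and "dist q (g x) < e/2"
    using near by blast
  moreover have "dist (g' x) (g x) < e/2"
    using close \<open>x \<in> A\<close> by blast
  ultimately have "dist q p < e"
    using dist_triangle_lt[of q "g x" "g' x" e] p by simp
  then show "p \<in> W"
    using margin \<open>q \<in> K\<close> \<open>p \<in> Z\<close> by blast
qed

lemma R_set_singleton_by_cover:
  assumes "g \<in> R_set X f n {y} Z k"
  obtains \<U> where "open (\<Union>\<U>)" and "g ` fibre X f y \<inter> Z \<subseteq> \<Union>\<U>"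
    and "\<And>g' y'. continuous_map X euclidean g' \<Longrightarrow> g' ` fibre X f y' \<inter> Z \<subseteq> \<Union>\<U>
           \<Longrightarrow> g' \<in> R_set X f n {y'} Z k"
proof -
  from assms obtain \<U> where "\<forall>U\<in>\<U>. open U" and "g ` fibre X f y \<inter> Z \<subseteq> \<Union>\<U>"
    and "\<forall>U\<in>\<U>. \<forall>a\<in>U. \<forall>b\<in>U. dist a b \<le> 1 / real k" and "order_le \<U> n"
    unfolding R_set_def by blast
  show ?thesis
  proof (rule that)
    show "open (\<Union>\<U>)"
      using \<open>\<forall>U\<in>\<U>. open U\<close> by auto
    show "g ` fibre X f y \<inter> Z \<subseteq> \<Union>\<U>" by fact
    show "g' \<in> R_set X f n {y'} Z k"
      if "continuous_map X euclidean g'" and "g' ` fibre X f y' \<inter> Z \<subseteq> \<Union>\<U>" for g' y'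
      unfolding R_set_def
    proof (intro CollectI conjI ballI exI[of _ \<U>])
      show "continuous_map X euclidean g'" by fact
    qed (use that \<open>\<forall>U\<in>\<U>. open U\<close> \<open>\<forall>U\<in>\<U>. \<forall>a\<in>U. \<forall>b\<in>U. dist a b \<le> 1 / real k\<close>
             \<open>order_le \<U> n\<close> in auto)
  qed
qed

lemma compact_image_of_fibre:
  assumes "perfect_map X Y f" and "y \<in> topspace Y"
    and "continuous_map X euclidean g"
  shows "compact (g ` fibre X f y)"
proof -
  have "compactin X (fibre X f y)"
    using assms(1,2) by (simp add: perfect_map_def proper_map_def fibre_def)
  then show ?thesis
    using image_compactin[OF _ assms(3)] by simp
qed

theorem lemma2p2:
  fixes X :: "'a topology" and Y :: "'b topology" and f :: "'a \<Rightarrow> 'b"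
    and Z :: "'m::complete_space set" and g :: "'a \<Rightarrow> 'm" and n k :: nat and y :: 'b
  assumes "closed Z"
    and "perfect_map X Y f"
    and "map_dim_le X Y f n"
    and "y \<in> topspace Y" and "k \<ge> 1"
    and "g \<in> R_set X f n {y} Z k"
    and "(metrizable_space X \<and> metrizable_space Y) \<or>
         (Z = UNIV \<and> paracompact_space X \<and> paracompact_space Y)"
  shows "\<exists>V \<delta>. openin Y V \<and> y \<in> V \<and> \<delta> > 0 \<and>
           (\<forall>y'\<in>V. \<forall>g'. continuous_map X euclidean g' \<and>
               (\<forall>x\<in>fibre X f y'. dist (g' x) (g x) < \<delta>)
               \<longrightarrow> g' \<in> R_set X f n {y'} Z k)"
proof -
  have g: "continuous_map X euclidean g"
    using assms(6) by (simp add: R_set_def)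
  obtain \<U> where "open (\<Union>\<U>)" and cover: "g ` fibre X f y \<inter> Z \<subseteq> \<Union>\<U>"
    and reuse: "\<And>g' y'. continuous_map X euclidean g' \<Longrightarrow> g' ` fibre X f y' \<inter> Z \<subseteq> \<Union>\<U>
                 \<Longrightarrow> g' \<in> R_set X f n {y'} Z k"
    by (fact R_set_singleton_by_cover[OF assms(6)])
  define K where "K = g ` fibre X f y"
  have "compact K"
    unfolding K_def by (rule compact_image_of_fibre[OF assms(2,4) g])
  then obtain e where "e > 0" and margin: "\<forall>q\<in>K. \<forall>p\<in>Z. dist q p < e \<longrightarrow> p \<in> \<Union>\<U>"
    using margin_of_compact_inside_open[OF _ assms(1) \<open>open (\<Union>\<U>)\<close>] cover[folded K_def]
    by blast
  define U where "U = {x \<in> topspace X. g x \<in> (\<Union>q\<in>K. ball q (e/2))}"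
  have "openin X U"
    unfolding U_def by (rule openin_continuous_map_preimage[OF g]) auto
  moreover have "fibre X f y \<subseteq> U"
    using \<open>e > 0\<close> by (auto simp: U_def K_def fibre_def)
  moreover have "closed_map X Y f"
    using assms(2) by (simp add: perfect_map_def proper_map_def)
  ultimately obtain V where "openin Y V" "y \<in> V" and tube: "{x \<in> topspace X. f x \<in> V} \<subseteq> U"
    using assms(4) unfolding closed_map_fibre_neighbourhood fibre_def by blast
  have "g' \<in> R_set X f n {y'} Z k"
    if "y' \<in> V" and g': "continuous_map X euclidean g'"
      and close: "\<forall>x\<in>fibre X f y'. dist (g' x) (g x) < e/2" for y' g'
  proof (rule reuse[OF g'])
    have "\<forall>x\<in>fibre X f y'. \<exists>q\<in>K. dist q (g x) < e/2"
      using tube \<open>y' \<in> V\<close> by (auto simp: U_def fibre_def)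
    then show "g' ` fibre X f y' \<inter> Z \<subseteq> \<Union>\<U>"
      using perturbation_within_margin[OF margin] close by blast
  qed
  then show ?thesis
    using \<open>openin Y V\<close> \<open>y \<in> V\<close> \<open>e > 0\<close> by (intro exI[of _ V] exI[of _ "e/2"]) auto
qed

end
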